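(* Let $F(x)=\frac{\sqrt{1-2x+5x^2}+x-1}{2x}$ (a power series with $F(0)=0$), and for $n,k\geq0$ let $t_{n,k}=[x^n]\,\frac{1}{x}F(x)^{k+1}$. Then for all $n\geq 0$, $$m_n=\sum_{k=0}^{n}t_{n,k}\,s_k .$$
   Context: Steps: $U=(1,1)$, $D=(1,-1)$, $h=(1,0)$, $H=(2,0)$. A Motzkin path of length $2n$ is a lattice path from $(0,0)$ to $(2n,0)$ with steps $U,D,h$ never going below the $x$-axis; a Schröder path of length $2n$ is the same with steps $U,D,H$. Such a path is symmetric if it has a vertex with $x$-coordinate $n$ and is invariant under reflection in the line $x=n$ (reversing the step sequence and interchanging $U$ and $D$, keeping horizontal steps, gives the same sequence). $m_n$ = number of symmetric Motzkin paths of length $2n$, $s_n$ = number of symmetric Schröder paths of length $2n$. $[x^n]$ denotes the coefficient of $x^n$. *)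

theory Defs
  imports Complex_Main "HOL-Computational_Algebra.Formal_Power_Series"
begin

datatype step = Up | Dn | Lv | Hz  (* U=(1,1), D=(1,-1), h=(1,0), H=(2,0) *)

fun dy :: "step \<Rightarrow> int" where
  "dy Up = 1" | "dy Dn = -1" | "dy Lv = 0" | "dy Hz = 0"

fun dx :: "step \<Rightarrow> nat" where
  "dx Hz = 2" | "dx _ = 1"

fun mirror :: "step \<Rightarrow> step" where
  "mirror Up = Dn" | "mirror Dn = Up" | "mirror s = s"

definition height :: "step list \<Rightarrow> int" where
  "height xs = (\<Sum>s\<leftarrow>xs. dy s)"

definition width :: "step list \<Rightarrow> nat" where
  "width xs = (\<Sum>s\<leftarrow>xs. dx s)"

definition nonneg_path :: "step list \<Rightarrow> bool" where
  "nonneg_path xs \<longleftrightarrow> (\<forall>i\<le>length xs. height (take i xs) \<ge> 0) \<and> height xs = 0"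

definition motzkin_paths :: "nat \<Rightarrow> step list set" where
  "motzkin_paths n = {xs. set xs \<subseteq> {Up, Dn, Lv} \<and> width xs = 2*n \<and> nonneg_path xs}"

definition schroeder_paths :: "nat \<Rightarrow> step list set" where
  "schroeder_paths n = {xs. set xs \<subseteq> {Up, Dn, Hz} \<and> width xs = 2*n \<and> nonneg_path xs}"

text \<open>Symmetric: a vertex with x-coordinate n, and invariance under reflection in x = n.\<close>
definition symmetric_path :: "nat \<Rightarrow> step list \<Rightarrow> bool" where
  "symmetric_path n xs \<longleftrightarrow> (\<exists>i\<le>length xs. width (take i xs) = n) \<and> rev (map mirror xs) = xs"

definition m_seq :: "nat \<Rightarrow> nat" where
  "m_seq n = card {xs \<in> motzkin_paths n. symmetric_path n xs}"

definition s_seq :: "nat \<Rightarrow> nat" where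
  "s_seq n = card {xs \<in> schroeder_paths n. symmetric_path n xs}"

text \<open>F(x) = (sqrt(1-2x+5x^2) + x - 1)/(2x), with the square root having constant term 1.\<close>
definition F_fps :: "real fps" where
  "F_fps = (fps_radical (\<lambda>_ _. 1) 2 (1 - 2 * fps_X + 5 * fps_X ^ 2) + fps_X - 1) / (2 * fps_X)"

definition t_coeff :: "nat \<Rightarrow> nat \<Rightarrow> real" where
  "t_coeff n k = fps_nth (F_fps ^ (k + 1) / fps_X) n"

end

theory Submission
  imports Defs
begin

(* A symmetric path of length 2n is a path p of width n followed by its mirror image, and it stays
   above the axis iff p does; so m_n and s_n count meanders (paths weakly above the axis, ending at
   any height) of width n with steps U, D, h resp. U, D, H.  Let a(n,j), b(n,j) count those ending at
   height j.  Removing the last step gives a(n+1,j) = a(n,j-1) + a(n,j) + a(n,j+1) and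
   b(n+1,j) = b(n,j-1) + b(n,j+1) + b(n-1,j), while F = x (1 + F - F^2) gives
   t(n+1,k) = t(n,k-1) + t(n,k) - t(n,k+1).  Summation by parts then yields
   a(n,j) = sum_k t(n,k) b(k,j) by induction on n, and summing over j gives the theorem. *)

lemma F_fps_functional_eq: "F_fps = fps_X * (1 + F_fps - F_fps^2)"
proof -
  define P :: "real fps" where "P = 1 - 2 * fps_X + 5 * fps_X ^ 2"
  define R where "R = fps_radical (\<lambda>_ _. 1) 2 P"
  have P0: "fps_nth P 0 = 1" by (simp add: P_def)
  have R_sq: "R ^ 2 = P"
    using power_radical[of P "\<lambda>_ _. 1" 1] P0 by (simp add: R_def numeral_2_eq_2)
  define G where "G = fps_const (1/2) * fps_shift 1 (R + fps_X - 1)"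
  have "R + fps_X - 1 = fps_X * fps_shift 1 (R + fps_X - 1)"
    by (rule fps_ext) (simp add: R_def P0)
  also have "\<dots> = G * (2 * fps_X)"
    by (simp add: G_def fps_numeral_fps_const mult_ac)
  finally have num: "R + fps_X - 1 = G * (2 * fps_X)" .
  have "F_fps = G"
    unfolding F_fps_def by (fold P_def R_def) (simp add: num fps_divide_times_eq)
  then have R_eq: "R = 2 * fps_X * F_fps - fps_X + 1"
    using num by (simp add: algebra_simps)
  have "4 * fps_X * (F_fps - fps_X * (1 + F_fps - F_fps^2)) = (2 * fps_X * F_fps - fps_X + 1)^2 - P"
    unfolding P_def power2_eq_square by algebra
  also have "\<dots> = 0" using R_sq R_eq by simp
  finally show ?thesis by simp
qed

lemma fps_nth_F_fps_0: "fps_nth F_fps 0 = 0"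
  by (subst F_fps_functional_eq) simp

lemma fps_nth_F_fps_power_Suc:
  "fps_nth (F_fps ^ Suc k) (Suc n) =
     fps_nth (F_fps ^ k) n + fps_nth (F_fps ^ Suc k) n - fps_nth (F_fps ^ Suc (Suc k)) n"
proof -
  have "F_fps ^ Suc k = F_fps ^ k * (fps_X * (1 + F_fps - F_fps^2))"
    using F_fps_functional_eq by (metis power_Suc2)
  also have "\<dots> = fps_X * (F_fps ^ k + F_fps ^ Suc k - F_fps ^ Suc (Suc k))"
    by (simp add: algebra_simps power2_eq_square)
  finally have "F_fps ^ Suc k = fps_X * (F_fps ^ k + F_fps ^ Suc k - F_fps ^ Suc (Suc k))" .
  from arg_cong[OF this, of "\<lambda>f. fps_nth f (Suc n)"] show ?thesis
    by (simp del: power_Suc)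
qed

lemma t_coeff_eq_fps_nth: "t_coeff n k = fps_nth (F_fps ^ Suc k) (Suc n)"
  by (simp add: t_coeff_def)

lemma t_coeff_0: "t_coeff 0 k = (if k = 0 then 1 else 0)"
  by (simp only: t_coeff_eq_fps_nth fps_nth_F_fps_power_Suc) (simp add: fps_power_zeroth fps_nth_F_fps_0)

lemma t_coeff_Suc:
  "t_coeff (Suc n) k = (case k of 0 \<Rightarrow> 0 | Suc i \<Rightarrow> t_coeff n i) + t_coeff n k - t_coeff n (Suc k)"
  by (cases k) (simp_all only: t_coeff_eq_fps_nth fps_nth_F_fps_power_Suc[of _ "Suc n"] nat.case
      power_0 fps_one_nth nat.distinct if_False)

lemma t_coeff_eq_0: "n < k \<Longrightarrow> t_coeff n k = 0"
proof -
  assume "n < k"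
  have "F_fps ^ Suc k = fps_X ^ Suc k * (1 + F_fps - F_fps^2) ^ Suc k"
    by (subst F_fps_functional_eq) (simp only: power_mult_distrib)
  then show ?thesis
    using \<open>n < k\<close> by (simp only: t_coeff_eq_fps_nth fps_X_power_mult_nth) simp
qed

lemma t_coeff_sum_extend:
  "n \<le> m \<Longrightarrow> (\<Sum>k\<le>m. t_coeff n k * g k) = (\<Sum>k\<le>n. t_coeff n k * g k)"
  by (rule sum.mono_neutral_right) (auto simp: t_coeff_eq_0)

lemma t_coeff_sum_Suc:
  fixes g :: "nat \<Rightarrow> real"
  shows "(\<Sum>k\<le>Suc n. t_coeff (Suc n) k * g k) =
         (\<Sum>k\<le>n. t_coeff n k * (g (Suc k) + g k - (case k of 0 \<Rightarrow> 0 | Suc i \<Rightarrow> g i)))"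
proof -
  have shift_up: "(\<Sum>k\<le>Suc n. (case k of 0 \<Rightarrow> 0 | Suc i \<Rightarrow> t_coeff n i) * g k) =
      (\<Sum>k\<le>n. t_coeff n k * g (Suc k))"
    by (simp add: sum.atMost_Suc_shift del: sum.atMost_Suc)
  have stay: "(\<Sum>k\<le>Suc n. t_coeff n k * g k) = (\<Sum>k\<le>n. t_coeff n k * g k)"
    by (rule t_coeff_sum_extend) simp
  have "(\<Sum>k\<le>n. t_coeff n k * (case k of 0 \<Rightarrow> 0 | Suc i \<Rightarrow> g i)) =
      (\<Sum>k\<le>Suc n. t_coeff n k * (case k of 0 \<Rightarrow> 0 | Suc i \<Rightarrow> g i))"
    by (rule t_coeff_sum_extend[symmetric]) simp
  also have "\<dots> = (\<Sum>k\<le>n. t_coeff n (Suc k) * g k)"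
    by (simp only: sum.atMost_Suc_shift) simp
  also have "\<dots> = (\<Sum>k\<le>Suc n. t_coeff n (Suc k) * g k)"
    by (simp add: t_coeff_eq_0)
  finally have shift_down: "(\<Sum>k\<le>Suc n. t_coeff n (Suc k) * g k) =
      (\<Sum>k\<le>n. t_coeff n k * (case k of 0 \<Rightarrow> 0 | Suc i \<Rightarrow> g i))" ..
  have "(\<Sum>k\<le>Suc n. t_coeff (Suc n) k * g k) =
      (\<Sum>k\<le>Suc n. (case k of 0 \<Rightarrow> 0 | Suc i \<Rightarrow> t_coeff n i) * g k)
      + (\<Sum>k\<le>Suc n. t_coeff n k * g k) - (\<Sum>k\<le>Suc n. t_coeff n (Suc k) * g k)"
    by (simp only: t_coeff_Suc distrib_right left_diff_distrib sum.distrib sum_subtractf)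
  also have "\<dots> = (\<Sum>k\<le>n. t_coeff n k * (g (Suc k) + g k - (case k of 0 \<Rightarrow> 0 | Suc i \<Rightarrow> g i)))"
    by (simp only: shift_up stay shift_down distrib_left right_diff_distrib sum.distrib sum_subtractf)
  finally show ?thesis .
qed

lemma height_Nil [simp]: "height [] = 0"
  and height_Cons [simp]: "height (s # xs) = dy s + height xs"
  and height_append [simp]: "height (xs @ ys) = height xs + height ys"
  by (simp_all add: height_def)

lemma width_Nil [simp]: "width [] = 0"
  and width_Cons [simp]: "width (s # xs) = dx s + width xs"
  and width_append [simp]: "width (xs @ ys) = width xs + width ys"
  by (simp_all add: width_def)

lemma dx_ge_1: "1 \<le> dx s"
  by (cases s) auto

lemma dy_mirror [simp]: "dy (mirror s) = - dy s"
  and dx_mirror [simp]: "dx (mirror s) = dx s"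
  and mirror_mirror [simp]: "mirror (mirror s) = s"
  by (cases s; simp)+

lemma height_rev_map_mirror [simp]: "height (rev (map mirror xs)) = - height xs"
  by (induction xs) auto

lemma width_rev_map_mirror [simp]: "width (rev (map mirror xs)) = width xs"
  by (induction xs) auto

lemma length_le_width: "length xs \<le> width xs"
  by (induction xs) (simp_all add: add_mono[OF dx_ge_1, simplified])

lemma height_le_width: "height xs \<le> int (width xs)"
proof (induction xs)
  case (Cons s xs)
  then show ?case by (cases s) auto
qed simp

lemma width_eq_0_iff [simp]: "width xs = 0 \<longleftrightarrow> xs = []"
  using length_le_width[of xs] by auto

lemma append_eq_append_same_width: "xs @ ys = xs' @ ys' \<Longrightarrow> width xs = width xs' \<Longrightarrow> xs = xs'"
proof (induction xs arbitrary: xs')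
  case (Cons s xs)
  then obtain s' xs'' where "xs' = s' # xs''"
    using dx_ge_1[of s] by (cases xs') auto
  with Cons show ?case by auto
qed simp

definition nonneg_prefixes :: "step list \<Rightarrow> bool" where
  "nonneg_prefixes xs \<longleftrightarrow> (\<forall>i\<le>length xs. height (take i xs) \<ge> 0)"

lemma nonneg_path_iff: "nonneg_path xs \<longleftrightarrow> nonneg_prefixes xs \<and> height xs = 0"
  by (simp add: nonneg_path_def nonneg_prefixes_def)

lemma nonneg_prefixes_height: "nonneg_prefixes xs \<Longrightarrow> 0 \<le> height xs"
  unfolding nonneg_prefixes_def by (metis order_refl take_all)

lemma nonneg_prefixes_snoc:
  "nonneg_prefixes (xs @ [s]) \<longleftrightarrow> nonneg_prefixes xs \<and> 0 \<le> height xs + dy s"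
  unfolding nonneg_prefixes_def
  by (auto simp: le_Suc_eq all_conj_distrib)

lemma nonneg_prefixes_appendD: "nonneg_prefixes (xs @ ys) \<Longrightarrow> nonneg_prefixes xs"
  unfolding nonneg_prefixes_def
proof (intro allI impI)
  fix i
  assume "\<forall>i\<le>length (xs @ ys). 0 \<le> height (take i (xs @ ys))" and "i \<le> length xs"
  then show "0 \<le> height (take i xs)"
    by (metis le_add1 length_append order.trans take_append append_Nil2 diff_is_0_eq take_0)
qed

lemma nonneg_path_mirror_double:
  "nonneg_path (xs @ rev (map mirror xs)) \<longleftrightarrow> nonneg_prefixes xs"
proof -
  have "0 \<le> height (take i (xs @ rev (map mirror xs)))"
    if "nonneg_prefixes xs" for i
  proof (cases "i \<le> length xs")
    case False
    define d where "d = length xs - (i - length xs)"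
    have "take (i - length xs) (rev (map mirror xs)) = rev (map mirror (drop d xs))"
      by (simp add: take_rev d_def drop_map)
    then have "height (take i (xs @ rev (map mirror xs))) = height xs - height (drop d xs)"
      using False by simp
    also have "\<dots> = height (take d xs)"
      by (metis append_take_drop_id add_diff_cancel_right' height_append)
    finally show ?thesis
      using that unfolding nonneg_prefixes_def d_def by simp
  qed (use that in \<open>simp add: nonneg_prefixes_def\<close>)
  then show ?thesis
    unfolding nonneg_path_iff
    by (metis nonneg_prefixes_def[of "xs @ rev (map mirror xs)"] nonneg_prefixes_appendD
        height_append height_rev_map_mirror add.right_inverse)
qed

lemma symmetric_path_iff_mirror_double:
  assumes "width xs = 2 * n"
  shows "symmetric_path n xs \<longleftrightarrow> (\<exists>p. width p = n \<and> xs = p @ rev (map mirror p))"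
proof
  assume "symmetric_path n xs"
  then obtain i where half: "width (take i xs) = n" and mirror_inv: "rev (map mirror xs) = xs"
    unfolding symmetric_path_def by blast
  define p q where "p = take i xs" and "q = drop i xs"
  have xs_eq: "xs = p @ q"
    by (simp add: p_def q_def)
  have "p @ q = rev (map mirror xs)"
    using mirror_inv xs_eq by simp
  also have "\<dots> = rev (map mirror q) @ rev (map mirror p)"
    by (simp add: xs_eq)
  finally have halves: "p @ q = rev (map mirror q) @ rev (map mirror p)" .
  have "width p = n"
    using half by (simp add: p_def)
  moreover from this have "width q = n"
    using assms xs_eq by simp
  ultimately have "p = rev (map mirror q)"
    using append_eq_append_same_width[OF halves] by simp
  then have "xs = p @ rev (map mirror p)"
    by (simp add: xs_eq rev_map comp_def)
  with \<open>width p = n\<close> show "\<exists>p. width p = n \<and> xs = p @ rev (map mirror p)"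
    by blast
next
  assume "\<exists>p. width p = n \<and> xs = p @ rev (map mirror p)"
  then obtain p where "width p = n" "xs = p @ rev (map mirror p)" by blast
  then show "symmetric_path n xs"
    unfolding symmetric_path_def by (intro conjI exI[of _ "length p"]) (auto simp: rev_map comp_def)
qed

definition meanders :: "step set \<Rightarrow> nat \<Rightarrow> step list set" where
  "meanders S w = {p. set p \<subseteq> S \<and> width p = w \<and> nonneg_prefixes p}"

lemma card_symmetric_paths:
  assumes "mirror ` S \<subseteq> S"
  shows "card {xs. set xs \<subseteq> S \<and> width xs = 2 * n \<and> nonneg_path xs \<and> symmetric_path n xs} =
         card (meanders S n)"
proof -
  let ?double = "\<lambda>p. p @ rev (map mirror p)"
  have "inj_on ?double (meanders S n)"
    by (rule inj_onI) (auto simp: meanders_def intro: append_eq_append_same_width)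
  moreover have "{xs. set xs \<subseteq> S \<and> width xs = 2 * n \<and> nonneg_path xs \<and> symmetric_path n xs} =
      ?double ` meanders S n"
    using assms by (auto simp: symmetric_path_iff_mirror_double nonneg_path_mirror_double meanders_def
        image_iff) blast+
  ultimately show ?thesis
    by (simp add: card_image)
qed

definition meander_count :: "step set \<Rightarrow> nat \<Rightarrow> int \<Rightarrow> nat" where
  "meander_count S w j = card {p \<in> meanders S w. height p = j}"

lemma finite_meanders: "finite S \<Longrightarrow> finite (meanders S w)"
  by (rule finite_subset[OF _ finite_lists_length_le[of S w]])
    (use length_le_width in \<open>fastforce simp: meanders_def\<close>)

lemma meanders_height_bounds: "p \<in> meanders S w \<Longrightarrow> 0 \<le> height p \<and> height p \<le> int w"
  using height_le_width nonneg_prefixes_height by (auto simp: meanders_def)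

lemma meander_count_eq_0:
  assumes "j < 0 \<or> int w < j"
  shows "meander_count S w j = 0"
proof -
  have "{p \<in> meanders S w. height p = j} = {}"
    using meanders_height_bounds assms by force
  then show ?thesis
    unfolding meander_count_def by (simp only: card.empty)
qed

lemma meander_count_0: "meander_count S 0 j = (if j = 0 then 1 else 0)"
proof -
  have "meanders S 0 = {[]}"
    by (auto simp: meanders_def nonneg_prefixes_def)
  then show ?thesis
    by (simp add: meander_count_def Collect_conv_if)
qed

lemma card_meanders:
  assumes "finite S" "w \<le> m"
  shows "card (meanders S w) = (\<Sum>j\<in>{0..int m}. meander_count S w j)"
proof -
  have "meanders S w = (\<Union>j\<in>{0..int m}. {p \<in> meanders S w. height p = j})"
    using meanders_height_bounds assms(2) by fastforce
  also have "card \<dots> = (\<Sum>j\<in>{0..int m}. meander_count S w j)"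
    unfolding meander_count_def by (rule card_UN_disjoint) (use finite_meanders[OF assms(1)] in auto)
  finally show ?thesis .
qed

lemma meander_count_last_step:
  assumes "finite S" "0 \<le> j" "0 < w"
  shows "meander_count S w j =
         (\<Sum>s\<in>S. if dx s \<le> w then meander_count S (w - dx s) (j - dy s) else 0)"
proof -
  define ending where "ending s = {p \<in> meanders S (w - dx s). height p = j - dy s}" for s
  have "{p \<in> meanders S w. height p = j} = (\<Union>s\<in>{s \<in> S. dx s \<le> w}. (\<lambda>p. p @ [s]) ` ending s)"
  proof (intro equalityI subsetI)
    fix p
    assume p: "p \<in> {p \<in> meanders S w. height p = j}"
    then have "p \<noteq> []"
      using assms(3) by (auto simp: meanders_def)
    then obtain q s where "p = q @ [s]"
      by (cases p rule: rev_exhaust) auto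
    with p show "p \<in> (\<Union>s\<in>{s \<in> S. dx s \<le> w}. (\<lambda>p. p @ [s]) ` ending s)"
      by (auto simp: ending_def meanders_def nonneg_prefixes_snoc)
  qed (use assms(2) in \<open>auto simp: ending_def meanders_def nonneg_prefixes_snoc\<close>)
  also have "card \<dots> = (\<Sum>s\<in>{s \<in> S. dx s \<le> w}. card ((\<lambda>p. p @ [s]) ` ending s))"
    by (rule card_UN_disjoint) (use assms(1) finite_meanders in \<open>auto simp: ending_def\<close>)
  also have "\<dots> = (\<Sum>s\<in>{s \<in> S. dx s \<le> w}. meander_count S (w - dx s) (j - dy s))"
    by (rule sum.cong) (auto simp: card_image inj_on_def ending_def meander_count_def)
  finally show ?thesis
    unfolding meander_count_def by (simp add: sum.inter_filter assms(1))
qed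

lemma m_seq_eq_card_meanders: "m_seq n = card (meanders {Up, Dn, Lv} n)"
  unfolding m_seq_def motzkin_paths_def by (subst card_symmetric_paths[symmetric]) auto

lemma s_seq_eq_card_meanders: "s_seq n = card (meanders {Up, Dn, Hz} n)"
  unfolding s_seq_def schroeder_paths_def by (subst card_symmetric_paths[symmetric]) auto

lemma motzkin_meander_count_Suc:
  assumes "0 \<le> j"
  shows "meander_count {Up, Dn, Lv} (Suc n) j =
         meander_count {Up, Dn, Lv} n (j - 1) + meander_count {Up, Dn, Lv} n j
         + meander_count {Up, Dn, Lv} n (j + 1)"
  using assms by (subst meander_count_last_step) auto

lemma schroeder_meander_count_Suc:
  assumes "0 \<le> j"
  shows "meander_count {Up, Dn, Hz} (Suc n) j =
         meander_count {Up, Dn, Hz} n (j - 1) + meander_count {Up, Dn, Hz} n (j + 1)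
         + (case n of 0 \<Rightarrow> 0 | Suc i \<Rightarrow> meander_count {Up, Dn, Hz} i j)"
  using assms by (subst meander_count_last_step) (auto split: nat.split)

lemma motzkin_meander_count_eq_t_coeff_sum:
  "real (meander_count {Up, Dn, Lv} n j) =
   (\<Sum>k\<le>n. t_coeff n k * real (meander_count {Up, Dn, Hz} k j))"
proof (induction n arbitrary: j)
  case 0
  then show ?case
    by (simp add: t_coeff_0 meander_count_0)
next
  case (Suc n)
  show ?case
  proof (cases "j < 0")
    case True
    then show ?thesis
      by (simp add: meander_count_eq_0)
  next
    case False
    define b where "b k j = real (meander_count {Up, Dn, Hz} k j)" for k j
    have "(\<Sum>k\<le>Suc n. t_coeff (Suc n) k * b k j) =
        (\<Sum>k\<le>n. t_coeff n k * (b (Suc k) j + b k j - (case k of 0 \<Rightarrow> 0 | Suc i \<Rightarrow> b i j)))"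
      by (rule t_coeff_sum_Suc)
    also have "\<dots> = (\<Sum>k\<le>n. t_coeff n k * (b k (j - 1) + b k j + b k (j + 1)))"
      using False by (intro sum.cong refl) (simp add: b_def schroeder_meander_count_Suc split: nat.split)
    also have "\<dots> = real (meander_count {Up, Dn, Lv} (Suc n) j)"
      using False by (simp add: Suc.IH b_def motzkin_meander_count_Suc distrib_left sum.distrib)
    finally show ?thesis
      by (simp add: b_def)
  qed
qed

theorem theorem3p6:
  fixes n :: nat
  shows "real (m_seq n) = (\<Sum>k=0..n. t_coeff n k * real (s_seq k))"
proof -
  let ?a = "\<lambda>j. real (meander_count {Up, Dn, Lv} n j)"
  let ?b = "\<lambda>k j. real (meander_count {Up, Dn, Hz} k j)"
  have "real (m_seq n) = (\<Sum>j\<in>{0..int n}. ?a j)"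
    by (simp add: m_seq_eq_card_meanders card_meanders[of _ n n])
  also have "\<dots> = (\<Sum>k\<le>n. t_coeff n k * (\<Sum>j\<in>{0..int n}. ?b k j))"
    by (simp add: motzkin_meander_count_eq_t_coeff_sum sum_distrib_left sum.swap[of _ "{0..int n}"])
  also have "\<dots> = (\<Sum>k\<le>n. t_coeff n k * real (s_seq k))"
    by (intro sum.cong refl) (simp add: s_seq_eq_card_meanders card_meanders[of _ _ n])
  finally show ?thesis
    by (simp add: atLeast0AtMost)
qed

end
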